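(* If $n\ge4$ and $h$ is odd with $h\ge\frac{3(n-1)}{n-3}$, then there exists $p\in\mathcal P$ such that $D_{\mu(p)}(p)=D_{\mu(p^r)}(p^r)=\{n\}$.
   Context: Let $n,h\ge2$ be integers, $N=\{1,\dots,n\}$, $H=\{1,\dots,h\}$. $\mathcal P$ is the set of $h$-tuples $p=(p_1,\dots,p_h)$ of linear orders on $N$; $p^r$ is obtained by reversing each $p_i$; $x>_{p_i}y$ means $x\ne y$ and $p_i$ ranks $x$ above $y$. For an integer $\mu$ with $h/2<\mu\le h$, $D_\mu(p)=\{x\in N: \forall y\in N,\ |\{i: y>_{p_i}x\}|<\mu\}$, and $\mu(p)=\min\{\mu\in\mathbb N\cap(h/2,h]: D_\mu(p)\neq\varnothing\}$. *)

theory Defs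
  imports Complex_Main
begin

text \<open>A linear order on N = {1..n} is a relation r with linear_order_on {1..n} r,
  where (a,b) in r means a is ranked at or below b. A profile is a function
  p :: nat => (nat*nat) set, only its values on H = {1..h} matter.\<close>

definition profiles :: "nat \<Rightarrow> nat \<Rightarrow> (nat \<Rightarrow> (nat \<times> nat) set) set" where
  "profiles n h = {p. \<forall>i\<in>{1..h}. linear_order_on {1..n} (p i)}"

definition rev_profile :: "(nat \<Rightarrow> (nat \<times> nat) set) \<Rightarrow> nat \<Rightarrow> (nat \<times> nat) set" where
  "rev_profile p = (\<lambda>i. converse (p i))"

definition ranked_above :: "(nat \<times> nat) set \<Rightarrow> nat \<Rightarrow> nat \<Rightarrow> bool" where
  "ranked_above r x y \<longleftrightarrow> x \<noteq> y \<and> (y, x) \<in> r"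

definition D :: "nat \<Rightarrow> nat \<Rightarrow> nat \<Rightarrow> (nat \<Rightarrow> (nat \<times> nat) set) \<Rightarrow> nat set" where
  "D n h \<mu> p = {x\<in>{1..n}. \<forall>y\<in>{1..n}. card {i\<in>{1..h}. ranked_above (p i) y x} < \<mu>}"

definition mu_of :: "nat \<Rightarrow> nat \<Rightarrow> (nat \<Rightarrow> (nat \<times> nat) set) \<Rightarrow> nat" where
  "mu_of n h p = (LEAST \<mu>. real h / 2 < real \<mu> \<and> \<mu> \<le> h \<and> D n h \<mu> p \<noteq> {})"

end

theory Submission
  imports Defs
begin

(*
  If n loses to every alternative in at most a of the h votes, loses to some alternative in exactly a
  votes, and every other alternative loses to some alternative in more than a votes, then D_a(p) is
  empty and D_(a+1)(p) = {n}; for h < 2(a + 1) this means mu(p) = a + 1 and D_mu(p)(p) = {n}.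
  Such a profile, together with the analogous property of its reversal for some b, is written down
  on c + 1 alternatives only (c = 5, 4, 3 for h = 5, h = 7, h >= 9) and then blown up to n
  alternatives by inserting clones of alternative 1 directly below 1 in every vote: in p a clone
  loses unanimously to 1, and in the reversal it loses exactly as often as 1 does. The only
  constraint is c < n, and the hypothesis on h guarantees n >= 6 for h = 5 and n >= 5 for h = 7.
*)

definition pref_count :: "nat \<Rightarrow> (nat \<Rightarrow> (nat \<times> nat) set) \<Rightarrow> nat \<Rightarrow> nat \<Rightarrow> nat" where
  "pref_count h p y x = card {i\<in>{1..h}. ranked_above (p i) y x}"

lemma D_eq_pref_count:
  "D n h \<mu> p = {x\<in>{1..n}. \<forall>y\<in>{1..n}. pref_count h p y x < \<mu>}"
  by (simp add: D_def pref_count_def)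

lemma pref_count_rev_profile: "pref_count h (rev_profile p) y x = pref_count h p x y"
  by (auto simp: pref_count_def rev_profile_def ranked_above_def intro!: arg_cong[where f=card])

lemma pref_count_self: "pref_count h p x x = 0"
  by (simp add: pref_count_def ranked_above_def)

lemma D_mono: "\<mu> \<le> \<mu>' \<Longrightarrow> D n h \<mu> p \<subseteq> D n h \<mu>' p"
  by (fastforce simp: D_def)

lemma mu_of_eq_Suc:
  assumes "a < h" "h < 2 * Suc a" "D n h a p = {}" "D n h (Suc a) p \<noteq> {}"
  shows "mu_of n h p = Suc a"
  unfolding mu_of_def
proof (rule Least_equality)
  show "real h / 2 < real (Suc a) \<and> Suc a \<le> h \<and> D n h (Suc a) p \<noteq> {}"
  proof -
    have "real h < 2 * real (Suc a)" using assms(2) by linarith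
    then show ?thesis using assms(1,4) by simp
  qed
next
  fix \<mu> assume "real h / 2 < real \<mu> \<and> \<mu> \<le> h \<and> D n h \<mu> p \<noteq> {}"
  then show "Suc a \<le> \<mu>"
    using D_mono[of \<mu> a n h p] assms(3) by (cases "\<mu> \<le> a") auto
qed

lemma D_mu_of_eq_singleton:
  assumes "w \<in> {1..n}" "a < h" "h < 2 * Suc a"
    and "\<forall>y\<in>{1..n}. pref_count h p y w \<le> a"
    and "\<exists>y\<in>{1..n}. a \<le> pref_count h p y w"
    and "\<forall>x\<in>{1..n} - {w}. \<exists>y\<in>{1..n}. a < pref_count h p y x"
  shows "D n h (mu_of n h p) p = {w}"
proof -
  have "D n h a p = {}"
  proof -
    have "\<exists>y\<in>{1..n}. a \<le> pref_count h p y x" if "x \<in> {1..n}" for x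
      using assms(5,6) that by (cases "x = w") (auto dest!: bspec[of _ _ x] intro: less_imp_le)
    then show ?thesis unfolding D_eq_pref_count by (auto simp: not_less[symmetric])
  qed
  moreover have "D n h (Suc a) p = {w}"
    unfolding D_eq_pref_count
  proof safe
    fix x assume "x \<in> {1..n}" "\<forall>y\<in>{1..n}. pref_count h p y x < Suc a"
    then show "x = w" using assms(6) by (meson DiffI not_less_eq singletonD)
  qed (use assms(1,4) in \<open>auto simp: less_Suc_eq_le\<close>)
  ultimately show ?thesis
    using mu_of_eq_Suc[OF assms(2,3)] by simp
qed

definition score_order :: "nat \<Rightarrow> (nat \<Rightarrow> nat) \<Rightarrow> (nat \<times> nat) set" where
  "score_order n g = {(x, y). x \<in> {1..n} \<and> y \<in> {1..n} \<and> g x \<le> g y}"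

lemma linear_order_on_le_inj:
  fixes g :: "'a \<Rightarrow> 'b::linorder"
  assumes "inj_on g A"
  shows "linear_order_on A {(x, y). x \<in> A \<and> y \<in> A \<and> g x \<le> g y}"
  using assms unfolding linear_order_on_def partial_order_on_def preorder_on_def refl_on_def
    trans_def antisym_def total_on_def inj_on_def
  by auto

lemma ranked_above_score_order:
  assumes "inj_on g {1..n}" "x \<in> {1..n}" "y \<in> {1..n}"
  shows "ranked_above (score_order n g) y x \<longleftrightarrow> g x < g y"
  using assms inj_onD[OF assms(1)] unfolding ranked_above_def score_order_def
  by (auto simp: order.order_iff_strict)

lemma mult_add_less_mult_add_iff:
  fixes m A B r s :: nat
  assumes "r < m" "s < m"
  shows "m * A + r < m * B + s \<longleftrightarrow> A < B \<or> (A = B \<and> r < s)"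
proof -
  have "m * A' + r' < m * B' + s'" if "A' < B'" "r' < m" for A' B' r' s' :: nat
  proof -
    have "m * A' + r' < m * Suc A'" using that(2) by simp
    also have "\<dots> \<le> m * B'" using that(1) by (intro mult_le_mono2) simp
    finally show ?thesis by simp
  qed
  from this[of A B r s] this[of B A s r] assms show ?thesis
    by (cases A B rule: linorder_cases) auto
qed

text \<open>The alternative \<open>n\<close> plays the role of the virtual alternative \<open>0\<close>, the alternatives
  \<open>1..c\<close> play themselves, and every other alternative is a clone of \<open>1\<close>.\<close>

definition virtual_alt :: "nat \<Rightarrow> nat \<Rightarrow> nat \<Rightarrow> nat" where
  "virtual_alt n c z = (if z = n then 0 else if z \<le> c then z else 1)"

text \<open>The factor \<open>Suc n\<close> makes the score \<open>g\<close> of the virtual alternative decisive; the summand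
  \<open>n - z < n\<close> puts the clones of \<open>1\<close> directly below \<open>1\<close>.\<close>

definition clone_score :: "nat \<Rightarrow> nat \<Rightarrow> (nat \<Rightarrow> nat) \<Rightarrow> nat \<Rightarrow> nat" where
  "clone_score n c g z = Suc n * g (virtual_alt n c z) + (if c < z \<and> z < n then n - z else n)"

definition clone_profile :: "nat \<Rightarrow> nat \<Rightarrow> (nat \<Rightarrow> nat \<Rightarrow> nat) \<Rightarrow> nat \<Rightarrow> (nat \<times> nat) set" where
  "clone_profile n c q i = score_order n (clone_score n c (q i))"

definition score_pref_count :: "nat \<Rightarrow> (nat \<Rightarrow> nat \<Rightarrow> nat) \<Rightarrow> nat \<Rightarrow> nat \<Rightarrow> nat" where
  "score_pref_count h q u v = card {i\<in>{1..h}. q i v < q i u}"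

lemma virtual_alt_mem: "1 \<le> c \<Longrightarrow> virtual_alt n c z \<in> {0..c}"
  by (simp add: virtual_alt_def)

lemma virtual_alt_surj: "c < n \<Longrightarrow> v \<le> c \<Longrightarrow> \<exists>y\<in>{1..n}. virtual_alt n c y = v"
  by (cases "v = 0") (auto simp: virtual_alt_def intro: bexI[of _ n] bexI[of _ v])

lemma clone_score_less_iff:
  "clone_score n c g x < clone_score n c g y \<longleftrightarrow>
     g (virtual_alt n c x) < g (virtual_alt n c y) \<or>
     g (virtual_alt n c x) = g (virtual_alt n c y) \<and>
     (if c < x \<and> x < n then n - x else n) < (if c < y \<and> y < n then n - y else n)"
  unfolding clone_score_def by (rule mult_add_less_mult_add_iff) auto

lemma clone_score_less_iff_virtual:
  assumes "inj_on g {0..c}" "1 \<le> c" "virtual_alt n c x \<noteq> virtual_alt n c y"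
  shows "clone_score n c g x < clone_score n c g y \<longleftrightarrow>
           g (virtual_alt n c x) < g (virtual_alt n c y)"
proof -
  have "g (virtual_alt n c x) \<noteq> g (virtual_alt n c y)"
    using inj_onD[OF assms(1) _ virtual_alt_mem virtual_alt_mem] assms(2,3) by blast
  then show ?thesis using clone_score_less_iff by auto
qed

lemma clone_score_less_first:
  assumes "1 \<le> c" "c < z" "z < n"
  shows "clone_score n c g z < clone_score n c g 1"
  using assms by (simp add: clone_score_def virtual_alt_def)

lemma inj_on_clone_score:
  assumes inj: "inj_on g {0..c}" and c: "1 \<le> c"
  shows "inj_on (clone_score n c g) {1..n}"
proof (rule inj_onI)
  fix x y assume xy: "x \<in> {1..n}" "y \<in> {1..n}" and eq: "clone_score n c g x = clone_score n c g y"
  have "g (virtual_alt n c x) = g (virtual_alt n c y)"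
    and offset_eq: "(if c < x \<and> x < n then n - x else n) = (if c < y \<and> y < n then n - y else n)"
    using clone_score_less_iff[where n = n and c = c and g = g and x = x and y = y]
      clone_score_less_iff[where n = n and c = c and g = g and x = y and y = x] eq
    by (simp_all only: less_irrefl simp_thms) linarith+
  then have "virtual_alt n c x = virtual_alt n c y"
    using inj_onD[OF inj _ virtual_alt_mem virtual_alt_mem] c by blast
  then show "x = y"
    using xy offset_eq by (simp add: virtual_alt_def split: if_splits)
qed

lemma clone_profile_in_profiles:
  "(\<And>i. i \<in> {1..h} \<Longrightarrow> inj_on (q i) {0..c}) \<Longrightarrow> 1 \<le> c \<Longrightarrow> clone_profile n c q \<in> profiles n h"
  unfolding profiles_def clone_profile_def score_order_def
  by (blast intro: linear_order_on_le_inj inj_on_clone_score)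

lemma pref_count_clone_profile:
  assumes inj: "\<And>i. i \<in> {1..h} \<Longrightarrow> inj_on (q i) {0..c}" and c: "1 \<le> c"
    and "x \<in> {1..n}" "y \<in> {1..n}" "virtual_alt n c x \<noteq> virtual_alt n c y"
  shows "pref_count h (clone_profile n c q) y x
           = score_pref_count h q (virtual_alt n c y) (virtual_alt n c x)"
  unfolding pref_count_def score_pref_count_def clone_profile_def
proof (intro arg_cong[where f = card] Collect_cong conj_cong refl)
  fix i assume "i \<in> {1..h}"
  then have inj_i: "inj_on (q i) {0..c}" by (rule inj)
  have "ranked_above (score_order n (clone_score n c (q i))) y x
          \<longleftrightarrow> clone_score n c (q i) x < clone_score n c (q i) y"
    using inj_on_clone_score[OF inj_i c] assms(3,4) by (rule ranked_above_score_order)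
  also have "\<dots> \<longleftrightarrow> q i (virtual_alt n c x) < q i (virtual_alt n c y)"
    using inj_i c assms(5) by (rule clone_score_less_iff_virtual)
  finally show "ranked_above (score_order n (clone_score n c (q i))) y x
                  \<longleftrightarrow> q i (virtual_alt n c x) < q i (virtual_alt n c y)" .
qed

lemma pref_count_clone_profile_first:
  assumes inj: "\<And>i. i \<in> {1..h} \<Longrightarrow> inj_on (q i) {0..c}" and c: "1 \<le> c" "c < z" "z < n"
  shows "pref_count h (clone_profile n c q) 1 z = h"
proof -
  have "ranked_above (clone_profile n c q i) 1 z" if "i \<in> {1..h}" for i
  proof -
    have "ranked_above (score_order n (clone_score n c (q i))) 1 z
            \<longleftrightarrow> clone_score n c (q i) z < clone_score n c (q i) 1"
      using inj_on_clone_score[OF inj[OF that] c(1)] by (rule ranked_above_score_order) (use c in auto)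
    then show ?thesis unfolding clone_profile_def using clone_score_less_first[OF c] by blast
  qed
  then have "{i\<in>{1..h}. ranked_above (clone_profile n c q i) 1 z} = {1..h}" by blast
  then show ?thesis unfolding pref_count_def by simp
qed

lemma score_pref_count_self: "score_pref_count h q u u = 0"
  by (simp add: score_pref_count_def)

lemma D_mu_of_eq_virtual:
  fixes Q :: "nat \<Rightarrow> nat \<Rightarrow> nat"
  assumes c: "1 \<le> c" "c < n" and a: "a < h" "h < 2 * Suc a"
    and virtual: "\<And>x y. x \<in> {1..n} \<Longrightarrow> y \<in> {1..n} \<Longrightarrow> virtual_alt n c x \<noteq> virtual_alt n c y
                    \<Longrightarrow> pref_count h p y x = Q (virtual_alt n c y) (virtual_alt n c x)"
    and clones: "\<And>z. c < z \<Longrightarrow> z < n \<Longrightarrow> \<exists>y\<in>{1..n}. a < pref_count h p y z"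
    and Q_le: "\<forall>v\<in>{1..c}. Q v 0 \<le> a" and Q_ge: "\<exists>v\<in>{1..c}. a \<le> Q v 0"
    and Q_beat: "\<forall>u\<in>{1..c}. \<exists>v\<in>{0..c} - {u}. a < Q v u"
  shows "D n h (mu_of n h p) p = {n}"
proof (rule D_mu_of_eq_singleton[OF _ a])
  have virt_n: "virtual_alt n c n = 0" by (simp add: virtual_alt_def)
  have virt_core: "virtual_alt n c y \<in> {1..c}" if "y \<in> {1..n}" "y \<noteq> n" for y
    using that c by (auto simp: virtual_alt_def)
  show "n \<in> {1..n}" using c by simp
  show "\<forall>y\<in>{1..n}. pref_count h p y n \<le> a"
  proof
    fix y assume y: "y \<in> {1..n}"
    show "pref_count h p y n \<le> a"
    proof (cases "y = n")
      case False
      then have "pref_count h p y n = Q (virtual_alt n c y) 0"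
        using virtual[of n y] virt_core[OF y] y c virt_n by auto
      then show ?thesis using Q_le virt_core[OF y False] by simp
    qed (simp add: pref_count_self)
  qed
  show "\<exists>y\<in>{1..n}. a \<le> pref_count h p y n"
  proof -
    obtain v where v: "v \<in> {1..c}" "a \<le> Q v 0" using Q_ge by blast
    then have "virtual_alt n c v = v" "v \<in> {1..n}" using c by (auto simp: virtual_alt_def)
    then show ?thesis using virtual[of n v] v virt_n c by (intro bexI[of _ v]) auto
  qed
  show "\<forall>x\<in>{1..n} - {n}. \<exists>y\<in>{1..n}. a < pref_count h p y x"
  proof
    fix x assume x: "x \<in> {1..n} - {n}"
    show "\<exists>y\<in>{1..n}. a < pref_count h p y x"
    proof (cases "x \<le> c")
      case True
      then have virt_x: "virtual_alt n c x = x" using x by (simp add: virtual_alt_def)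
      have "x \<in> {1..c}" using x True by simp
      then obtain v where v: "v \<in> {0..c} - {x}" "a < Q v x" using Q_beat by blast
      obtain y where y: "y \<in> {1..n}" "virtual_alt n c y = v"
        using virtual_alt_surj[OF c(2), of v] v by auto
      show ?thesis using virtual[of x y] x y v virt_x by (intro bexI[OF _ y(1)]) auto
    qed (use clones x in auto)
  qed
qed

lemma D_mu_of_clone_profile:
  fixes q :: "nat \<Rightarrow> nat \<Rightarrow> nat" and h :: nat
  defines "S \<equiv> score_pref_count h q"
  assumes inj: "\<And>i. i \<in> {1..h} \<Longrightarrow> inj_on (q i) {0..c}" and c: "1 \<le> c" "c < n"
    and a: "a < h" "h < 2 * Suc a" and b: "b < h" "h < 2 * Suc b"
    and a_le: "\<forall>v\<in>{1..c}. S v 0 \<le> a" and a_ge: "\<exists>v\<in>{1..c}. a \<le> S v 0"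
    and a_beat: "\<forall>u\<in>{1..c}. \<exists>v\<in>{0..c}. a < S v u"
    and b_le: "\<forall>v\<in>{1..c}. S 0 v \<le> b" and b_ge: "\<exists>v\<in>{1..c}. b \<le> S 0 v"
    and b_beat: "\<forall>u\<in>{1..c}. \<exists>v\<in>{0..c}. b < S u v"
  shows "D n h (mu_of n h (clone_profile n c q)) (clone_profile n c q) = {n}"
    and "D n h (mu_of n h (rev_profile (clone_profile n c q))) (rev_profile (clone_profile n c q)) = {n}"
proof -
  have S_self: "S u u = 0" for u by (simp add: S_def score_pref_count_self)
  have avoid_self: "\<exists>v\<in>{0..c} - {u}. t < R v" if "\<exists>v\<in>{0..c}. t < R v" "R u = 0"
    for t u and R :: "nat \<Rightarrow> nat"
    using that by force
  have virtual: "pref_count h (clone_profile n c q) y x = S (virtual_alt n c y) (virtual_alt n c x)"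
    if "x \<in> {1..n}" "y \<in> {1..n}" "virtual_alt n c x \<noteq> virtual_alt n c y" for x y
    unfolding S_def using pref_count_clone_profile[OF inj c(1) that] .
  show "D n h (mu_of n h (clone_profile n c q)) (clone_profile n c q) = {n}"
  proof (rule D_mu_of_eq_virtual[OF c a virtual])
    show "\<exists>y\<in>{1..n}. a < pref_count h (clone_profile n c q) y z" if "c < z" "z < n" for z
      using pref_count_clone_profile_first[OF inj c(1) that] a c by (intro bexI[of _ 1]) auto
    show "\<forall>u\<in>{1..c}. \<exists>v\<in>{0..c} - {u}. a < S v u"
      using a_beat avoid_self[of a "\<lambda>v. S v _"] S_self by blast
  qed (use a_le a_ge in auto)
  show "D n h (mu_of n h (rev_profile (clone_profile n c q))) (rev_profile (clone_profile n c q)) = {n}"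
  proof (rule D_mu_of_eq_virtual[where Q = "\<lambda>u v. S v u", OF c b])
    show "pref_count h (rev_profile (clone_profile n c q)) y x = S (virtual_alt n c x) (virtual_alt n c y)"
      if "x \<in> {1..n}" "y \<in> {1..n}" "virtual_alt n c x \<noteq> virtual_alt n c y" for x y
      using virtual[of y x] that by (simp add: pref_count_rev_profile)
    show "\<exists>y\<in>{1..n}. b < pref_count h (rev_profile (clone_profile n c q)) y z" if "c < z" "z < n" for z
    proof -
      \<comment> \<open>in the reversed profile a clone of \<open>1\<close> is beaten by the same alternatives as \<open>1\<close>\<close>
      have "1 \<in> {1..c}" using c by simp
      then obtain v where v: "v \<in> {0..c}" "b < S 1 v" using b_beat by blast
      then have "v \<noteq> 1" using S_self by auto
      obtain y where y: "y \<in> {1..n}" "virtual_alt n c y = v"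
        using virtual_alt_surj[OF c(2), of v] v(1) by auto
      have "virtual_alt n c z = 1" using that by (simp add: virtual_alt_def)
      then show ?thesis using virtual[of y z] that y v \<open>v \<noteq> 1\<close>
        by (intro bexI[OF _ y(1)]) (simp add: pref_count_rev_profile)
    qed
    show "\<forall>u\<in>{1..c}. \<exists>v\<in>{0..c} - {u}. b < S u v"
      using b_beat avoid_self[of b "S _"] S_self by blast
  qed (use b_le b_ge in auto)
qed

text \<open>A block \<open>(r, m)\<close> stands for \<open>m\<close> voters who give the virtual alternative \<open>v\<close> the score \<open>r ! v\<close>.\<close>

definition ballots :: "(nat list \<times> nat) list \<Rightarrow> nat list list" where
  "ballots bs = concat (map (\<lambda>(r, m). replicate m r) bs)"

definition ballot_score :: "(nat list \<times> nat) list \<Rightarrow> nat \<Rightarrow> nat \<Rightarrow> nat" where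
  "ballot_score bs i v = ballots bs ! (i - 1) ! v"

definition block_pref_count :: "(nat list \<times> nat) list \<Rightarrow> nat \<Rightarrow> nat \<Rightarrow> nat" where
  "block_pref_count bs u v = (\<Sum>(r, m)\<leftarrow>bs. if r ! v < r ! u then m else 0)"

lemma card_nth_pred_eq_length_filter:
  "card {i\<in>{1..length xs}. P (xs ! (i - 1))} = length (filter P xs)"
proof -
  have "{i\<in>{1..length xs}. P (xs ! (i - 1))} = Suc ` {i. i < length xs \<and> P (xs ! i)}"
  proof (rule set_eqI, rule iffI)
    fix i assume "i \<in> {i\<in>{1..length xs}. P (xs ! (i - 1))}"
    then show "i \<in> Suc ` {i. i < length xs \<and> P (xs ! i)}"
      by (intro image_eqI[of _ _ "i - 1"]) auto
  qed auto
  then show ?thesis by (simp add: card_image length_filter_conv_card)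
qed

lemma length_ballots: "length (ballots bs) = (\<Sum>(r, m)\<leftarrow>bs. m)"
  by (induction bs) (auto simp: ballots_def)

lemma length_filter_ballots:
  "length (filter P (ballots bs)) = (\<Sum>(r, m)\<leftarrow>bs. if P r then m else 0)"
  by (induction bs) (auto simp: ballots_def)

lemma score_pref_count_ballot_score:
  "score_pref_count (length (ballots bs)) (ballot_score bs) u v = block_pref_count bs u v"
  unfolding score_pref_count_def ballot_score_def block_pref_count_def
  using card_nth_pred_eq_length_filter[of "ballots bs" "\<lambda>r. r ! v < r ! u"]
  by (simp add: length_filter_ballots)

lemma inj_on_ballot_score:
  assumes "\<forall>(r, m)\<in>set bs. distinct r \<and> length r = Suc c" "i \<in> {1..length (ballots bs)}"
  shows "inj_on (ballot_score bs i) {0..c}"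
proof -
  have "ballots bs ! (i - 1) \<in> set (ballots bs)" using assms(2) by auto
  then obtain m where "(ballots bs ! (i - 1), m) \<in> set bs"
    by (auto simp: ballots_def split: if_splits)
  then show ?thesis
    using assms(1) unfolding ballot_score_def by (auto intro!: inj_on_nth)
qed

lemma exists_profile_from_blocks:
  fixes bs :: "(nat list \<times> nat) list" and h :: nat
  defines "S \<equiv> block_pref_count bs"
  assumes rows: "\<forall>(r, m)\<in>set bs. distinct r \<and> length r = Suc c" and c: "1 \<le> c" "c < n"
    and h: "h = (\<Sum>(r, m)\<leftarrow>bs. m)"
    and a: "a < h" "h < 2 * Suc a" and b: "b < h" "h < 2 * Suc b"
    and a_le: "\<forall>v\<in>{1..c}. S v 0 \<le> a" and a_ge: "\<exists>v\<in>{1..c}. a \<le> S v 0"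
    and a_beat: "\<forall>u\<in>{1..c}. \<exists>v\<in>{0..c}. a < S v u"
    and b_le: "\<forall>v\<in>{1..c}. S 0 v \<le> b" and b_ge: "\<exists>v\<in>{1..c}. b \<le> S 0 v"
    and b_beat: "\<forall>u\<in>{1..c}. \<exists>v\<in>{0..c}. b < S u v"
  shows "\<exists>p\<in>profiles n h. D n h (mu_of n h p) p = {n} \<and>
           D n h (mu_of n h (rev_profile p)) (rev_profile p) = {n}"
proof -
  define q where "q = ballot_score bs"
  have h_len: "h = length (ballots bs)" by (simp add: h length_ballots)
  have inj: "inj_on (q i) {0..c}" if "i \<in> {1..h}" for i
    using inj_on_ballot_score[OF rows] that h_len by (simp add: q_def)
  have S_eq: "score_pref_count h q = S"
    by (intro ext) (simp add: S_def q_def h_len score_pref_count_ballot_score)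
  note counts = a_le a_ge a_beat b_le b_ge b_beat
  have "D n h (mu_of n h (clone_profile n c q)) (clone_profile n c q) = {n}"
    using inj c a b counts[folded S_eq] by (rule D_mu_of_clone_profile(1))
  moreover have "D n h (mu_of n h (rev_profile (clone_profile n c q)))
                   (rev_profile (clone_profile n c q)) = {n}"
    using inj c a b counts[folded S_eq] by (rule D_mu_of_clone_profile(2))
  moreover have "clone_profile n c q \<in> profiles n h"
    using inj c(1) by (rule clone_profile_in_profiles)
  ultimately show ?thesis by blast
qed

lemma exists_profile_5:
  assumes "6 \<le> n"
  shows "\<exists>p\<in>profiles n 5. D n 5 (mu_of n 5 p) p = {n} \<and>
           D n 5 (mu_of n 5 (rev_profile p)) (rev_profile p) = {n}"
  by (rule exists_profile_from_blocks[where c = 5 and a = 3 and b = 2 and bs =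
        "[([3,6,5,4,2,1], 1), ([3,1,6,5,4,2], 1), ([3,2,1,6,5,4], 1),
          ([3,4,2,1,6,5], 1), ([3,5,4,2,1,6], 1)]"])
     (use assms in \<open>simp_all add: block_pref_count_def atLeastAtMost_upt upt_rec del: set_upt\<close>)

lemma exists_profile_7:
  assumes "5 \<le> n"
  shows "\<exists>p\<in>profiles n 7. D n 7 (mu_of n 7 p) p = {n} \<and>
           D n 7 (mu_of n 7 (rev_profile p)) (rev_profile p) = {n}"
  by (rule exists_profile_from_blocks[where c = 4 and a = 4 and b = 3 and bs =
        "[([3,5,4,2,1], 2), ([3,1,5,4,2], 1), ([2,1,5,4,3], 1),
          ([3,2,1,5,4], 1), ([2,3,1,5,4], 1), ([3,4,2,1,5], 1)]"])
     (use assms in \<open>simp_all add: block_pref_count_def atLeastAtMost_upt upt_rec del: set_upt\<close>)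

lemma exists_profile_ge_9:
  assumes "4 \<le> n"
  shows "\<exists>p\<in>profiles n (2 * j + 9). D n (2 * j + 9) (mu_of n (2 * j + 9) p) p = {n} \<and>
           D n (2 * j + 9) (mu_of n (2 * j + 9) (rev_profile p)) (rev_profile p) = {n}"
  by (rule exists_profile_from_blocks[where c = 3 and a = "j + 5" and b = "j + 4" and bs =
        "[([3,2,4,1], j + 1), ([2,3,4,1], 2), ([3,4,1,2], 1),
          ([2,4,1,3], j + 2), ([3,1,2,4], 1), ([2,1,3,4], 2)]"])
     (use assms in \<open>simp_all add: block_pref_count_def atLeastAtMost_upt upt_rec del: set_upt\<close>)

lemma odd_above_bound_cases:
  fixes n h :: nat
  assumes "n \<ge> 4" and "odd h" and "real h \<ge> 3 * (real n - 1) / (real n - 3)"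
  obtains "h = 5" "6 \<le> n" | "h = 7" "5 \<le> n" | j where "h = 2 * j + 9"
proof -
  have bound: "3 * (real n - 1) \<le> real h * (real n - 3)"
    using assms(1,3) by (simp add: pos_divide_le_eq)
  have "5 \<le> h"
  proof (rule ccontr)
    assume "\<not> 5 \<le> h"
    then have "h \<le> 3" using assms(2) by presburger
    then have "real h * (real n - 3) \<le> 3 * (real n - 3)"
      using assms(1) by (intro mult_right_mono) auto
    then show False using bound by (simp add: algebra_simps)
  qed
  moreover obtain k where "h = 2 * k + 1" using assms(2) oddE by blast
  ultimately have "h = 5 \<or> h = 7 \<or> (\<exists>j. h = 2 * j + 9)" by presburger
  then show ?thesis using that bound by fastforce
qed

theorem proposition8:
  fixes n h :: nat
  assumes "n \<ge> 4" and "odd h" and "real h \<ge> 3 * (real n - 1) / (real n - 3)"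
  shows "\<exists>p\<in>profiles n h.
           D n h (mu_of n h p) p = {n} \<and>
           D n h (mu_of n h (rev_profile p)) (rev_profile p) = {n}"
  using assms
proof (cases rule: odd_above_bound_cases)
  case 1
  then show ?thesis using exists_profile_5 by simp
next
  case 2
  then show ?thesis using exists_profile_7 by simp
next
  case (3 j)
  then show ?thesis using exists_profile_ge_9[OF assms(1)] by simp
qed

end
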